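(* Let $k_1,k_2,\dots$ be i.i.d. random variables with values in $\{1,2,\dots\}$ and $\mathbb{P}(k_n=m)=\frac{1}{m(m+1)}$ for $m\ge 1$. Define record times $n_1=1$ and, for $j\ge1$, $n_{j+1}=\min\{n>n_j: k_n>k_{n_j}\}$ (so $k_{n_j}>\max_{n<n_j}k_n$). Then almost surely, for all sufficiently large $j$: (i) $k_n<k_{n_j}$ for every $n$ with $n_j<n<n_{j+1}$ (i.e. the value $k_{n_j}$ does not reappear before the next record), and (ii) $k_{n_j}>2^{j/3}$. *)

theory Defs
  imports "HOL-Probability.Probability"
begin

text \<open>Record times of a sequence kk (indexed from 1): record_time kk j is n_j for j >= 1;
  n_1 = 1 and n_(j+1) = min {n > n_j. kk n > kk n_j}. The value at j = 0 is unused.\<close>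
fun record_time :: "(nat \<Rightarrow> nat) \<Rightarrow> nat \<Rightarrow> nat" where
  "record_time kk 0 = 0"
| "record_time kk (Suc 0) = 1"
| "record_time kk (Suc (Suc j)) =
     (LEAST n. record_time kk (Suc j) < n \<and> kk (record_time kk (Suc j)) < kk n)"

end

theory Submission
  imports Defs "HOL-Probability.Probability"
begin

(*
  From a running maximum c, the next record of the sequence is the value x > c with probability
  (c + 1) / (x (x + 1)), so record values can be controlled by potentials that are (super)harmonic
  for one step of the sequence.

  (ii) The potential (N + 2) / (min c N + 2) is exactly harmonic for 2 to the power of the number of
  record values in (c, N]. With N = 2^i and Markov's inequality, at least 3i - 3 record values
  below 2^i occur with probability at most 8 * 4^-i, so by Borel-Cantelli this happens only for
  finitely many i. Since the j records up to n_j all have values at most k_(n_j), a value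
  k_(n_j) <= 2^(j/3) would put j record values below 2^i for i = j div 3 + 1.

  (i) The potential 2 / c bounds the expected number of later repetitions of a running maximum
  c >= 1, so with probability at least 1 - 2/c no running maximum >= c is ever repeated. Letting
  c grow, almost surely some c works; as k_(n_j) >= j, from j = c on no record value reappears
  before the next record.

  The estimates are proved for the prefixes (k_1, ..., k_T), whose law is replicate_pmf, and pass
  to T -> infinity by monotonicity.
*)

section \<open>Record values and repetitions of the running maximum\<close>

fun record_values :: "'a::linorder \<Rightarrow> 'a list \<Rightarrow> 'a set" where
  "record_values c [] = {}"
| "record_values c (x # xs) = (if c < x then insert x (record_values x xs) else record_values c xs)"

text \<open>The start value c counts as an already seen maximum; this can only over-count repetitions.\<close>

fun tie_count :: "'a::linorder \<Rightarrow> 'a \<Rightarrow> 'a list \<Rightarrow> nat" where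
  "tie_count U c [] = 0"
| "tie_count U c (x # xs) =
     (if c < x then tie_count U x xs else (if x = c \<and> c \<le> U then 1 else 0) + tie_count U c xs)"

lemma record_values_gt: "y \<in> record_values c xs \<Longrightarrow> c < y"
  by (induction c xs rule: record_values.induct) (auto split: if_splits)

lemma fold_max_eq_Max: "fold max xs c = Max (insert c (set xs))"
  by (metis Max.set_eq_fold list.set(2))

lemma record_values_append:
  "record_values c (xs @ ys) = record_values c xs \<union> record_values (fold max xs c) ys"
proof (induction xs arbitrary: c)
  case (Cons x xs)
  then show ?case
    by (cases "c < x") (auto simp: max.absorb1 max.absorb2 not_less)
qed simp

lemma tie_count_append:
  "tie_count U c (xs @ ys) = tie_count U c xs + tie_count U (fold max xs c) ys"
proof (induction xs arbitrary: c)
  case (Cons x xs)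
  then show ?case
    by (cases "c < x") (auto simp: max.absorb1 max.absorb2 not_less)
qed simp

lemma tie_count_eq_0: "U < c \<Longrightarrow> tie_count U c xs = 0"
  by (induction U c xs rule: tie_count.induct) auto

lemma tie_count_mono: "U \<le> U' \<Longrightarrow> tie_count U c xs \<le> tie_count U' c xs"
  by (induction xs arbitrary: c) (auto intro: le_SucI add_mono)

definition first_values :: "(nat \<Rightarrow> 'a) \<Rightarrow> nat \<Rightarrow> 'a list" where
  "first_values f T = map (\<lambda>i. f (Suc i)) [0..<T]"

lemma first_values_Suc: "first_values f (Suc T) = first_values f T @ [f (Suc T)]"
  by (simp add: first_values_def)

lemma length_first_values [simp]: "length (first_values f T) = T"
  by (simp add: first_values_def)

lemma first_values_eq_iff:
  "first_values f T = xs \<longleftrightarrow> length xs = T \<and> (\<forall>i<T. f (Suc i) = xs ! i)"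
  by (auto simp: first_values_def list_eq_iff_nth_eq)

lemma set_first_values: "set (first_values f T) = f ` {1..T}"
proof -
  have "set (first_values f T) = f ` (Suc ` {0..<T})"
    by (simp only: first_values_def set_map set_upt image_image)
  also have "Suc ` {0..<T} = {1..T}"
    by (simp add: atLeastLessThanSuc_atLeastAtMost)
  finally show ?thesis .
qed

lemma first_values_append:
  assumes "n \<le> T"
  shows "first_values f T = first_values f n @ map (\<lambda>i. f (Suc i)) [n..<T]"
proof -
  have "[0..<T] = [0..<n] @ [n..<T]"
    using upt_add_eq_append[of 0 n "T - n"] assms by simp
  then show ?thesis by (simp add: first_values_def)
qed

lemma record_values_first_values_mono:
  "n \<le> T \<Longrightarrow> record_values c (first_values f n) \<subseteq> record_values c (first_values f T)"
  by (subst (2) first_values_append) (auto simp: record_values_append)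

section \<open>Record times of an unbounded sequence\<close>

context
  fixes f :: "nat \<Rightarrow> nat"
  assumes unbounded: "\<And>y. \<exists>n>0. y < f n"
begin

lemma exists_later_greater: "\<exists>n>m. f m < f n"
proof -
  obtain n where n: "n > 0" "Max (f ` {..m}) < f n"
    using unbounded by blast
  have "f m \<le> Max (f ` {..m})" and "\<And>i. i \<le> m \<Longrightarrow> f i \<le> Max (f ` {..m})"
    by (simp_all add: Max_ge)
  with n show ?thesis
    by (metis leD linorder_not_less order.strict_trans1)
qed

lemma record_time_Suc:
  assumes "0 < j"
  shows "record_time f j < record_time f (Suc j)"
    and "f (record_time f j) < f (record_time f (Suc j))"
    and "\<And>n. record_time f j < n \<Longrightarrow> n < record_time f (Suc j) \<Longrightarrow> f n \<le> f (record_time f j)"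
proof -
  obtain j' where j: "j = Suc j'" using assms by (cases j) auto
  define r where "r = record_time f j"
  have next_eq: "record_time f (Suc j) = (LEAST n. r < n \<and> f r < f n)"
    by (simp add: r_def j)
  have "r < record_time f (Suc j) \<and> f r < f (record_time f (Suc j))"
    unfolding next_eq by (rule LeastI_ex[OF exists_later_greater])
  then show "record_time f j < record_time f (Suc j)"
    and "f (record_time f j) < f (record_time f (Suc j))"
    by (simp_all add: r_def)
  show "f n \<le> f (record_time f j)" if "record_time f j < n" "n < record_time f (Suc j)" for n
    using that not_less_Least unfolding next_eq r_def by fastforce
qed

lemma record_time_pos: "0 < j \<Longrightarrow> 0 < record_time f j"
proof (induction j)
  case (Suc j)
  then show ?case using record_time_Suc(1)[of j] by (cases "j = 0") auto
qed simp

lemma record_time_mono: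
  assumes "0 < i" "i \<le> j"
  shows "record_time f i \<le> record_time f j"
  using assms(2)
proof (induction j rule: dec_induct)
  case (step j)
  then show ?case using record_time_Suc(1)[of j] assms(1) by simp
qed simp

lemma record_value_strict_mono:
  "0 < i \<Longrightarrow> i < j \<Longrightarrow> f (record_time f i) < f (record_time f j)"
proof (induction j rule: less_induct)
  case (less j)
  then obtain j' where j: "j = Suc j'" "i \<le> j'" by (cases j) auto
  then have "f (record_time f i) \<le> f (record_time f j')"
    using less by (cases "i = j'") (auto intro: less_imp_le)
  also have "\<dots> < f (record_time f j)"
    using j less.prems by (simp add: record_time_Suc(2))
  finally show ?case .
qed

lemma less_record_value:
  "0 < j \<Longrightarrow> 0 < i \<Longrightarrow> i < record_time f j \<Longrightarrow> f i < f (record_time f j)"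
proof (induction j arbitrary: i)
  case (Suc j)
  show ?case
  proof (cases "j = 0")
    case False
    then consider "i < record_time f j" | "i = record_time f j" | "record_time f j < i"
      by linarith
    then show ?thesis
      using Suc False record_time_Suc[of j] by cases (auto intro: order.strict_trans le_less_trans)
  qed (use Suc in simp)
qed simp

lemma index_le_record_value: "0 < f 1 \<Longrightarrow> 0 < j \<Longrightarrow> j \<le> f (record_time f j)"
proof (induction j)
  case (Suc j)
  then show ?case
    using record_value_strict_mono[of j "Suc j"] by (cases "j = 0") auto
qed simp

lemma record_value_mem_record_values:
  assumes "0 < f 1" "0 < j"
  shows "f (record_time f j) \<in> record_values 0 (first_values f (record_time f j))"
proof -
  define r where "r = record_time f j"
  obtain r' where r': "r = Suc r'"
    using record_time_pos[OF assms(2)] by (cases r) (auto simp: r_def)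
  have "\<forall>y\<in>insert 0 (f ` {1..r'}). y < f r"
    using less_record_value[OF assms(2)] index_le_record_value[OF assms] assms(2) r'
    by (auto simp: r_def)
  then have "fold max (first_values f r') 0 < f r"
    by (simp add: fold_max_eq_Max set_first_values)
  then show ?thesis
    by (simp add: r_def[symmetric] r' first_values_Suc record_values_append)
qed

lemma index_le_card_record_values:
  assumes "0 < f 1" "0 < j" "f (record_time f j) \<le> N"
  shows "j \<le> card (record_values 0 (first_values f (record_time f j)) \<inter> {..N})"
proof -
  define v where "v i = f (record_time f i)" for i
  have "strict_mono_on {1..j} v"
    by (rule strict_mono_onI) (simp add: v_def record_value_strict_mono)
  then have card_eq: "card (v ` {1..j}) = j"
    by (simp add: card_image strict_mono_on_imp_inj_on)
  have sub: "v ` {1..j} \<subseteq> record_values 0 (first_values f (record_time f j)) \<inter> {..N}"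
  proof
    fix y assume "y \<in> v ` {1..j}"
    then obtain i where i: "0 < i" "i \<le> j" "y = v i" by (auto simp: Suc_le_eq)
    have "v i \<le> v j"
      using record_value_strict_mono[of i j] i by (cases "i = j") (auto simp: v_def)
    moreover have "v i \<in> record_values 0 (first_values f (record_time f j))"
      using record_value_mem_record_values[OF assms(1) i(1)]
        record_values_first_values_mono[OF record_time_mono[OF i(1,2)]]
      by (auto simp: v_def)
    ultimately show "y \<in> record_values 0 (first_values f (record_time f j)) \<inter> {..N}"
      using i(3) assms(3) by (auto simp: v_def)
  qed
  show ?thesis
    using card_mono[OF _ sub] card_eq by simp
qed

lemma tie_count_pos_if_repeated:
  assumes j: "0 < j" and n: "record_time f j < n" "n < record_time f (Suc j)"
    and repeat: "f n = f (record_time f j)" and "c \<le> f n" "f n \<le> U"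
  shows "0 < tie_count U c (first_values f n)"
proof -
  obtain n' where n': "n = Suc n'" using n by (cases n) auto
  have le: "f i \<le> f n" if "1 \<le> i" "i \<le> n'" for i
  proof -
    consider "i < record_time f j" | "i = record_time f j" | "record_time f j < i" by linarith
    then show ?thesis
    proof cases
      case 1
      then show ?thesis using less_record_value[OF j, of i] that repeat by simp
    next
      case 3
      then show ?thesis using record_time_Suc(3)[OF j, of i] that n n' repeat by simp
    qed (use repeat in simp)
  qed
  have "Max (insert c (f ` {1..n'})) = f n"
  proof (rule Max_eqI)
    show "f n \<in> insert c (f ` {1..n'})"
      using record_time_pos[OF j] n n' repeat by auto
  qed (use le assms(5) in auto)
  then have "fold max (first_values f n') c = f n"
    by (simp add: fold_max_eq_Max set_first_values)
  then show ?thesis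
    using assms(6) by (simp add: n' first_values_Suc tie_count_append)
qed

lemma eventually_record_value_gt_powr:
  assumes "0 < f 1"
    and few_small_records: "eventually (\<lambda>i. \<forall>T.
      card (record_values 0 (first_values f T) \<inter> {..2^i}) < 3 * i - 3) sequentially"
  shows "eventually (\<lambda>j. 2 powr (real j / 3) < real (f (record_time f j))) sequentially"
proof -
  obtain I where
    I: "\<And>i T. I \<le> i \<Longrightarrow> card (record_values 0 (first_values f T) \<inter> {..2^i}) < 3 * i - 3"
    using few_small_records unfolding eventually_sequentially by blast
  show ?thesis
  proof (rule eventually_sequentiallyI[of "3 * I + 1"], rule ccontr)
    fix j assume j: "3 * I + 1 \<le> j" and "\<not> 2 powr (real j / 3) < real (f (record_time f j))"
    define i where "i = j div 3 + 1"
    have "real (f (record_time f j)) \<le> 2 powr (real j / 3)"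
      using \<open>\<not> _\<close> by simp
    also have "\<dots> < 2 powr real i"
      unfolding i_def by (intro powr_less_mono) linarith+
    finally have "real (f (record_time f j)) < real (2 ^ i)"
      by (simp add: powr_realpow)
    then have "f (record_time f j) \<le> 2 ^ i"
      by linarith
    then have "j \<le> card (record_values 0 (first_values f (record_time f j)) \<inter> {..2^i})"
      using index_le_card_record_values assms(1) j by simp
    moreover have "3 * i - 3 \<le> j" and "I \<le> i"
      using j by (simp_all add: i_def)
    ultimately show False
      using I[OF \<open>I \<le> i\<close>, of "record_time f j"] by linarith
  qed
qed

lemma eventually_record_value_unrepeated:
  assumes "0 < f 1" "0 < c" and no_ties: "\<And>T. tie_count T c (first_values f T) = 0"
  shows "eventually (\<lambda>j. \<forall>n. record_time f j < n \<and> n < record_time f (Suc j)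
                       \<longrightarrow> f n < f (record_time f j)) sequentially"
proof (rule eventually_sequentiallyI[of c], intro allI impI, rule ccontr)
  fix j n assume "c \<le> j" and n: "record_time f j < n \<and> n < record_time f (Suc j)"
    and "\<not> f n < f (record_time f j)"
  with assms(2) have j: "0 < j" by simp
  have "f n \<le> f (record_time f j)"
    using record_time_Suc(3)[OF j] n by blast
  with \<open>\<not> _\<close> have repeat: "f n = f (record_time f j)"
    by simp
  with \<open>c \<le> j\<close> have "c \<le> f n"
    using index_le_record_value[OF assms(1) j] by simp
  define T where "T = max n (f n)"
  have "0 < tie_count (f n) c (first_values f n)"
    using tie_count_pos_if_repeated[OF j _ _ repeat \<open>c \<le> f n\<close>] n by simp
  also have "\<dots> \<le> tie_count T c (first_values f n)"
    by (rule tie_count_mono) (simp add: T_def)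
  also have "\<dots> \<le> tie_count T c (first_values f T)"
    using first_values_append[of n T f] by (simp add: T_def tie_count_append)
  finally show False using no_ties by simp
qed

lemma eventually_record_value_unrepeated_and_large:
  assumes "0 < f 1"
    and "eventually (\<lambda>i. \<forall>T.
      card (record_values 0 (first_values f T) \<inter> {..2^i}) < 3 * i - 3) sequentially"
    and "0 < c" "\<And>T. tie_count T c (first_values f T) = 0"
  shows "eventually (\<lambda>j.
           (\<forall>n. record_time f j < n \<and> n < record_time f (Suc j) \<longrightarrow> f n < f (record_time f j))
           \<and> 2 powr (real j / 3) < real (f (record_time f j))) sequentially"
  using eventually_conj[OF eventually_record_value_unrepeated eventually_record_value_gt_powr] assms
  by blast

end

section \<open>Prefixes of i.i.d. sequences\<close>

lemma nn_integral_measure_pmf_bounded: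
  assumes "\<And>x. 0 \<le> b x" "\<And>x. b x \<le> B"
  shows "(\<integral>\<^sup>+x. ennreal (b x) \<partial>measure_pmf p) = ennreal (measure_pmf.expectation p b)"
proof (rule nn_integral_eq_integral)
  show "integrable p b"
    using assms by (intro measure_pmf.integrable_const_bound[where B = B]) auto
qed (use assms in auto)

lemma nn_integral_replicate_pmf_Suc:
  "(\<integral>\<^sup>+xs. F xs \<partial>replicate_pmf (Suc T) p) = (\<integral>\<^sup>+x. \<integral>\<^sup>+xs. F (x # xs) \<partial>replicate_pmf T p \<partial>p)"
  by simp

lemma pmf_replicate_pmf_length:
  "pmf (replicate_pmf (length xs) p) xs = (\<Prod>i<length xs. pmf p (xs ! i))"
proof (induction xs)
  case (Cons y ys)
  have "emeasure (replicate_pmf (length (y # ys)) p) {y # ys}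
      = (\<integral>\<^sup>+x. \<integral>\<^sup>+zs. indicator {y} x * indicator {ys} zs \<partial>replicate_pmf (length ys) p \<partial>p)"
    by (simp add: indicator_def of_bool_conj)
  also have "\<dots> = emeasure p {y} * emeasure (replicate_pmf (length ys) p) {ys}"
    by (simp add: nn_integral_cmult nn_integral_multc)
  finally show ?case
    using Cons by (simp add: emeasure_pmf_single prod_nonneg prod.lessThan_Suc_shift
        flip: ennreal_mult del: prod.lessThan_Suc)
qed simp

lemma emeasure_replicate_pmf_lists: "emeasure (replicate_pmf T p) (lists A) = emeasure p A ^ T"
proof (induction T)
  case (Suc T)
  have "emeasure (replicate_pmf (Suc T) p) (lists A)
      = (\<integral>\<^sup>+x. \<integral>\<^sup>+zs. indicator A x * indicator (lists A) zs \<partial>replicate_pmf T p \<partial>p)"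
    by (simp add: indicator_def of_bool_conj)
  also have "\<dots> = emeasure p A * emeasure (replicate_pmf T p) (lists A)"
    by (simp add: nn_integral_cmult nn_integral_multc)
  finally show ?case
    using Suc by (simp add: mult.commute)
qed (simp add: emeasure_pmf_single)

lemma measure_replicate_pmf_lists:
  "measure_pmf.prob (replicate_pmf T p) (lists A) = measure_pmf.prob p A ^ T"
proof -
  have "ennreal (measure_pmf.prob (replicate_pmf T p) (lists A))
      = ennreal (measure_pmf.prob p A ^ T)"
    using emeasure_replicate_pmf_lists[of T p A]
    by (simp add: measure_pmf.emeasure_eq_measure ennreal_power)
  then show ?thesis
    by simp
qed

lemma (in finite_measure) measure_UN_incseq_le:
  assumes "range A \<subseteq> sets M" "incseq A" "\<And>i. measure M (A i) \<le> b"
  shows "measure M (\<Union>i. A i) \<le> b"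
  using assms(3) by (intro LIMSEQ_le_const2[OF finite_Lim_measure_incseq[OF assms(1,2)]]) auto

locale iid_sequence = prob_space M for M :: "'a measure" +
  fixes X :: "nat \<Rightarrow> 'a \<Rightarrow> 'b::countable" and p :: "'b pmf"
  assumes indep: "indep_vars (\<lambda>_. count_space UNIV) X {1..}"
    and prob_X_eq: "\<And>n x. 0 < n \<Longrightarrow> prob {\<omega> \<in> space M. X n \<omega> = x} = pmf p x"
begin

abbreviation X_prefix :: "nat \<Rightarrow> 'a \<Rightarrow> 'b list" where
  "X_prefix T \<omega> \<equiv> first_values (\<lambda>n. X n \<omega>) T"

lemma measurable_X [measurable]: "X (Suc i) \<in> measurable M (count_space UNIV)"
  using indep unfolding indep_vars_def2 by auto

lemma measurable_first_values [measurable]: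
  "(X_prefix T) \<in> measurable M (count_space UNIV)"
proof -
  have "(X_prefix T) -` {xs} \<inter> space M \<in> sets M" for xs
  proof -
    have "(X_prefix T) -` {xs} \<inter> space M
      = (if length xs = T then {\<omega> \<in> space M. \<forall>i<T. X (Suc i) \<omega> = xs ! i} else {})"
      by (auto simp: first_values_eq_iff)
    moreover have "{\<omega> \<in> space M. \<forall>i<T. X (Suc i) \<omega> = xs ! i} \<in> sets M"
      by measurable
    ultimately show ?thesis
      by simp
  qed
  then show ?thesis
    by (simp add: measurable_count_space_eq_countable)
qed

lemma sets_first_values_pred: "{\<omega> \<in> space M. P (X_prefix T \<omega>)} \<in> sets M"
proof -
  have "{\<omega> \<in> space M. P (X_prefix T \<omega>)} = (X_prefix T) -` {xs. P xs} \<inter> space M"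
    by auto
  then show ?thesis
    using measurable_sets[OF measurable_first_values, of "{xs. P xs}"] by simp
qed

lemma prob_first_values_eq:
  assumes "length xs = T"
  shows "prob {\<omega> \<in> space M. X_prefix T \<omega> = xs} = (\<Prod>i<T. pmf p (xs ! i))"
proof (cases "T = 0")
  case True
  then show ?thesis using assms by (simp add: first_values_eq_iff prob_space)
next
  case False
  define A where "A j = X j -` {xs ! (j - 1)} \<inter> space M" for j
  have indep_sets: "indep_sets (\<lambda>i. {X i -` B \<inter> space M | B. B \<in> sets (count_space UNIV)}) {1..}"
    using indep unfolding indep_vars_def2 by auto
  have A_mem: "A j \<in> {X j -` B \<inter> space M | B. B \<in> sets (count_space UNIV)}" for j
    unfolding A_def by (intro CollectI exI[of _ "{xs ! (j - 1)}"]) simp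
  have "prob (\<Inter>j\<in>Suc ` {..<T}. A j) = (\<Prod>j\<in>Suc ` {..<T}. prob (A j))"
  proof (rule indep_setsD[OF indep_sets])
    show "Suc ` {..<T} \<subseteq> {1..}" "finite (Suc ` {..<T})"
      by auto
    show "Suc ` {..<T} \<noteq> {}"
      using False by auto
    show "\<forall>j\<in>Suc ` {..<T}. A j \<in> {X j -` B \<inter> space M | B. B \<in> sets (count_space UNIV)}"
      using A_mem by blast
  qed
  also have "\<dots> = (\<Prod>i<T. prob (A (Suc i)))"
    by (simp add: prod.reindex)
  also have "\<dots> = (\<Prod>i<T. pmf p (xs ! i))"
  proof -
    have "A (Suc i) = {\<omega> \<in> space M. X (Suc i) \<omega> = xs ! i}" for i
      by (auto simp: A_def)
    then show ?thesis
      by (simp add: prob_X_eq)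
  qed
  also have "(\<Inter>j\<in>Suc ` {..<T}. A j) = {\<omega> \<in> space M. \<forall>i<T. X (Suc i) \<omega> = xs ! i}"
    using False by (auto simp: A_def)
  also have "\<dots> = {\<omega> \<in> space M. X_prefix T \<omega> = xs}"
    using assms by (simp add: first_values_eq_iff)
  finally show ?thesis .
qed

lemma distr_first_values:
  "distr M (count_space UNIV) (X_prefix T) = measure_pmf (replicate_pmf T p)"
proof (rule measure_eqI_countable[where A = UNIV])
  fix xs :: "'b list"
  have "emeasure (distr M (count_space UNIV) (X_prefix T)) {xs}
      = emeasure M {\<omega> \<in> space M. X_prefix T \<omega> = xs}"
    by (subst emeasure_distr[OF measurable_first_values])
      (auto intro!: arg_cong[where f = "emeasure M"])
  also have "\<dots> = emeasure (replicate_pmf T p) {xs}"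
  proof (cases "length xs = T")
    case True
    have "emeasure M {\<omega> \<in> space M. X_prefix T \<omega> = xs} = ennreal (\<Prod>i<T. pmf p (xs ! i))"
      using prob_first_values_eq[OF True] by (simp add: emeasure_eq_measure)
    also have "\<dots> = emeasure (replicate_pmf T p) {xs}"
      using pmf_replicate_pmf_length[of xs p] True by (simp add: emeasure_pmf_single)
    finally show ?thesis .
  next
    case False
    then have empty: "{\<omega> \<in> space M. X_prefix T \<omega> = xs} = {}"
      by auto
    have "pmf (replicate_pmf T p) xs = 0"
      using False by (simp add: set_replicate_pmf pmf_eq_0_set_pmf)
    then show ?thesis
      unfolding empty by (simp add: emeasure_pmf_single)
  qed
  finally show "emeasure (distr M (count_space UNIV) (X_prefix T)) {xs}
      = emeasure (replicate_pmf T p) {xs}" .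
qed auto

lemma prob_first_values_in:
  "prob {\<omega> \<in> space M. X_prefix T \<omega> \<in> S} = measure_pmf.prob (replicate_pmf T p) S"
proof -
  have "measure (distr M (count_space UNIV) (X_prefix T)) S = prob (X_prefix T -` S \<inter> space M)"
    by (rule measure_distr[OF measurable_first_values]) simp
  also have "X_prefix T -` S \<inter> space M = {\<omega> \<in> space M. X_prefix T \<omega> \<in> S}"
    by auto
  finally show ?thesis
    by (simp only: distr_first_values)
qed

lemma AE_not_always_in:
  fixes A :: "nat \<Rightarrow> 'b set"
  assumes "\<And>L. measure_pmf.prob p (A L) < 1"
  shows "AE \<omega> in M. \<forall>L. \<exists>n>0. X n \<omega> \<notin> A L"
proof -
  have "AE \<omega> in M. \<exists>n>0. X n \<omega> \<notin> A L" for L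
  proof (rule AE_I[where N = "{\<omega> \<in> space M. \<forall>n. X (Suc n) \<omega> \<in> A L}"])
    show "{\<omega> \<in> space M. \<not> (\<exists>n>0. X n \<omega> \<notin> A L)} \<subseteq> {\<omega> \<in> space M. \<forall>n. X (Suc n) \<omega> \<in> A L}"
      by auto
    show "{\<omega> \<in> space M. \<forall>n. X (Suc n) \<omega> \<in> A L} \<in> sets M"
      by measurable
    define q where "q = measure_pmf.prob p (A L)"
    have bound: "prob {\<omega> \<in> space M. \<forall>n. X (Suc n) \<omega> \<in> A L} \<le> q ^ T" for T
    proof -
      have "{\<omega> \<in> space M. X_prefix T \<omega> \<in> lists (A L)} \<in> sets M"
        by measurable
      then have "prob {\<omega> \<in> space M. \<forall>n. X (Suc n) \<omega> \<in> A L}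
          \<le> prob {\<omega> \<in> space M. X_prefix T \<omega> \<in> lists (A L)}"
        by (rule finite_measure_mono[rotated]) (auto simp: first_values_def)
      also have "\<dots> = q ^ T"
        by (simp add: prob_first_values_in measure_replicate_pmf_lists q_def)
      finally show ?thesis .
    qed
    have "(\<lambda>T. q ^ T) \<longlonglongrightarrow> 0"
      using assms[of L] by (intro LIMSEQ_power_zero) (simp add: q_def)
    then have "prob {\<omega> \<in> space M. \<forall>n. X (Suc n) \<omega> \<in> A L} \<le> 0"
      by (rule LIMSEQ_le_const) (use bound in blast)
    then show "emeasure M {\<omega> \<in> space M. \<forall>n. X (Suc n) \<omega> \<in> A L} = 0"
      by (simp add: emeasure_eq_measure measure_le_0_iff)
  qed
  then show ?thesis
    by (simp add: AE_all_countable)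
qed

end

section \<open>The distribution 1/(m(m+1)) and its potentials\<close>

definition inv_pronic :: "nat \<Rightarrow> real" where
  "inv_pronic m = (if m = 0 then 0 else 1 / (real m * (real m + 1)))"

lemma sum_inv_pronic_greaterThanAtMost:
  assumes "c \<le> N"
  shows "(\<Sum>m\<in>{c<..N}. inv_pronic m) = 1 / (real c + 1) - 1 / (real N + 1)"
proof -
  define g :: "nat \<Rightarrow> real" where "g m = - 1 / (real m + 1)" for m
  have "(\<Sum>m\<in>{c<..N}. inv_pronic m) = (\<Sum>m\<in>{Suc c..N}. g m - g (m - 1))"
    by (intro sum.cong) (auto simp: g_def inv_pronic_def of_nat_diff field_simps)
  also have "\<dots> = g N - g c"
    using assms by (rule sum_telescope'')
  finally show ?thesis
    by (simp add: g_def)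
qed

lemma sum_inv_pronic_atMost: "(\<Sum>m\<le>c. inv_pronic m) = real c / (real c + 1)"
proof -
  have "{..c} = insert 0 {0<..c}" by auto
  then have "(\<Sum>m\<le>c. inv_pronic m) = (\<Sum>m\<in>{0<..c}. inv_pronic m)"
    by (simp add: inv_pronic_def)
  then show ?thesis
    by (simp add: sum_inv_pronic_greaterThanAtMost field_simps)
qed

lemma sum_inv_consecutive_triple_greaterThanAtMost:
  assumes "c \<le> N"
  shows "(\<Sum>m\<in>{c<..N}. 2 / (real m * (real m + 1) * (real m + 2)))
           = 1 / ((real c + 1) * (real c + 2)) - 1 / ((real N + 1) * (real N + 2))"
proof -
  define g :: "nat \<Rightarrow> real" where "g m = - 1 / ((real m + 1) * (real m + 2))" for m
  have "(\<Sum>m\<in>{c<..N}. 2 / (real m * (real m + 1) * (real m + 2))) = (\<Sum>m\<in>{Suc c..N}. g m - g (m - 1))"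
  proof (intro sum.cong)
    fix m assume "m \<in> {Suc c..N}"
    then obtain m' where "m = Suc m'" by (cases m) auto
    then show "2 / (real m * (real m + 1) * (real m + 2)) = g m - g (m - 1)"
      by (simp add: g_def divide_simps) (simp add: algebra_simps)
  qed (auto simp: atLeastSucAtMost_greaterThanAtMost)
  also have "\<dots> = g N - g c"
    using assms by (rule sum_telescope'')
  finally show ?thesis
    by (simp add: g_def)
qed

lemma sum_inv_square_mult_Suc_greaterThanAtMost_le:
  assumes "1 \<le> c"
  shows "(\<Sum>m\<in>{c<..N}. 1 / ((real m)\<^sup>2 * (real m + 1))) \<le> 1 / (2 * real c * (real c + 1))"
proof (cases "c \<le> N")
  case True
  define g :: "nat \<Rightarrow> real" where "g m = - 1 / (2 * real m * (real m + 1))" for m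
  have "(\<Sum>m\<in>{c<..N}. 1 / ((real m)\<^sup>2 * (real m + 1))) \<le> (\<Sum>m\<in>{Suc c..N}. g m - g (m - 1))"
    unfolding atLeastSucAtMost_greaterThanAtMost
  proof (intro sum_mono)
    fix m assume "m \<in> {c<..N}"
    with assms obtain m' where m': "m = Suc m'" "m' \<ge> 1" by (cases m) auto
    then have m: "real m \<ge> 2" by simp
    have "g m - g (m - 1) = 1 / ((real m - 1) * real m * (real m + 1))"
      using m' by (simp add: g_def divide_simps) (simp add: algebra_simps)
    also have "1 / ((real m)\<^sup>2 * (real m + 1)) \<le> \<dots>"
      using m by (intro divide_left_mono mult_right_mono) (auto simp: power2_eq_square)
    finally show "1 / ((real m)\<^sup>2 * (real m + 1)) \<le> g m - g (m - 1)" .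
  qed
  also have "\<dots> = g N - g c"
    using True by (rule sum_telescope'')
  also have "\<dots> \<le> 1 / (2 * real c * (real c + 1))"
    by (simp add: g_def)
  finally show ?thesis .
qed simp

lemma inv_pronic_sums: "inv_pronic sums 1"
proof -
  have "(\<lambda>c. real c / real (Suc c)) \<longlonglongrightarrow> 1"
    by (rule LIMSEQ_n_over_Suc_n)
  then show ?thesis
    by (simp add: sums_def_le sum_inv_pronic_atMost add.commute)
qed

definition inv_pronic_pmf :: "nat pmf" where
  "inv_pronic_pmf = embed_pmf inv_pronic"

lemma pmf_inv_pronic_pmf [simp]: "pmf inv_pronic_pmf m = inv_pronic m"
  unfolding inv_pronic_pmf_def
proof (rule pmf_embed_pmf)
  show "0 \<le> inv_pronic m" for m
    by (simp add: inv_pronic_def)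
  then show "(\<integral>\<^sup>+m. ennreal (inv_pronic m) \<partial>count_space UNIV) = 1"
    by (simp add: nn_integral_count_space_nat suminf_ennreal_eq[OF _ inv_pronic_sums]
        flip: sums_unique[OF inv_pronic_sums])
qed

lemma prob_inv_pronic_pmf_atMost: "measure_pmf.prob inv_pronic_pmf {..c} = real c / (real c + 1)"
  by (simp add: measure_measure_pmf_finite sum_inv_pronic_atMost)

text \<open>For an infinite sequence with running maximum c and R the number of its later record values
  in (c, N], E[2^R] = record_potential N c; the step identity below expresses this harmonicity.\<close>

definition record_potential :: "nat \<Rightarrow> nat \<Rightarrow> real" where
  "record_potential N c = (real N + 2) / (real (min c N) + 2)"

lemma record_potential_bounds: "1 \<le> record_potential N c" "record_potential N c \<le> real N + 2"
  by (simp_all add: record_potential_def divide_simps)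

lemma expectation_record_potential_step:
  assumes "c < N"
  shows "measure_pmf.expectation inv_pronic_pmf
           (\<lambda>x. if x \<le> c then record_potential N c
                else if x \<le> N then 2 * record_potential N x else 1)
         = record_potential N c"
    (is "measure_pmf.expectation _ ?b = _")
proof -
  define b' where "b' x = ?b x - 1" for x
  have bound: "\<bar>b' x\<bar> \<le> 2 * (real N + 2)" for x
    using record_potential_bounds[of N c] record_potential_bounds[of N x] by (auto simp: b'_def)
  have "measure_pmf.expectation inv_pronic_pmf ?b
      = measure_pmf.expectation inv_pronic_pmf (\<lambda>x. b' x + 1)"
    by (simp add: b'_def)
  also have "\<dots> = measure_pmf.expectation inv_pronic_pmf b' + 1"
  proof (subst Bochner_Integration.integral_add)
    show "integrable inv_pronic_pmf b'"
      by (rule measure_pmf.integrable_const_bound[where B = "2 * (real N + 2)"])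
        (use bound in auto)
  qed auto
  also have "measure_pmf.expectation inv_pronic_pmf b' = (\<Sum>x\<le>N. b' x * inv_pronic x)"
    using assms by (subst integral_measure_pmf_real[where A = "{..N}"])
      (auto simp: b'_def split: if_splits)
  also have "\<dots> = (\<Sum>x\<le>c. b' x * inv_pronic x) + (\<Sum>x\<in>{c<..N}. b' x * inv_pronic x)"
    using assms by (subst sum.union_disjoint[symmetric]) (auto intro!: sum.cong)
  also have "(\<Sum>x\<le>c. b' x * inv_pronic x) = (record_potential N c - 1) * (real c / (real c + 1))"
    by (simp add: b'_def sum_inv_pronic_atMost flip: sum_distrib_left)
  also have "(\<Sum>x\<in>{c<..N}. b' x * inv_pronic x)
      = (real N + 2) * (\<Sum>x\<in>{c<..N}. 2 / (real x * (real x + 1) * (real x + 2)))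
        - (\<Sum>x\<in>{c<..N}. inv_pronic x)"
    by (simp add: sum_distrib_left flip: sum_subtractf)
      (auto intro!: sum.cong simp: b'_def inv_pronic_def record_potential_def divide_simps)
  also have "(\<Sum>x\<in>{c<..N}. 2 / (real x * (real x + 1) * (real x + 2)))
      = 1 / ((real c + 1) * (real c + 2)) - 1 / ((real N + 1) * (real N + 2))"
    using assms by (intro sum_inv_consecutive_triple_greaterThanAtMost) simp
  also have "(\<Sum>x\<in>{c<..N}. inv_pronic x) = 1 / (real c + 1) - 1 / (real N + 1)"
    using assms by (intro sum_inv_pronic_greaterThanAtMost) simp
  also have "(record_potential N c - 1) * (real c / (real c + 1))
      + ((real N + 2) * (1 / ((real c + 1) * (real c + 2)) - 1 / ((real N + 1) * (real N + 2)))
         - (1 / (real c + 1) - 1 / (real N + 1))) + 1 = record_potential N c"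
    using assms by (simp add: record_potential_def divide_simps) (simp add: algebra_simps)
  finally show ?thesis .
qed

lemma nn_integral_two_pow_card_record_values_le:
  "(\<integral>\<^sup>+xs. ennreal (2 ^ card (record_values c xs \<inter> {..N})) \<partial>replicate_pmf T inv_pronic_pmf)
     \<le> ennreal (record_potential N c)"
proof (induction T arbitrary: c)
  case 0
  then show ?case
    using ennreal_leI[OF record_potential_bounds(1)[of N c]] by simp
next
  case (Suc T)
  show ?case
  proof (cases "c < N")
    case False
    then have "record_values c xs \<inter> {..N} = {}" for xs
      using record_values_gt by fastforce
    then show ?thesis
      using ennreal_leI[OF record_potential_bounds(1)[of N c]] by simp
  next
    case True
    define b where
      "b x = (if x \<le> c then record_potential N c
              else if x \<le> N then 2 * record_potential N x else 1)" for x
    have step: "(\<integral>\<^sup>+xs. ennreal (2 ^ card (record_values c (x # xs) \<inter> {..N}))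
        \<partial>replicate_pmf T inv_pronic_pmf) \<le> ennreal (b x)" for x
    proof -
      consider "x \<le> c" | "c < x" "x \<le> N" | "N < x" by linarith
      then show ?thesis
      proof cases
        case 1
        then show ?thesis using Suc.IH[of c] by (simp add: b_def)
      next
        case 2
        then have "card (record_values c (x # xs) \<inter> {..N})
            = Suc (card (record_values x xs \<inter> {..N}))" for xs
          using record_values_gt[of x x xs] by (auto simp: Int_insert_left card_insert_if)
        then have "(\<integral>\<^sup>+xs. ennreal (2 ^ card (record_values c (x # xs) \<inter> {..N}))
              \<partial>replicate_pmf T inv_pronic_pmf)
            = 2 * (\<integral>\<^sup>+xs. ennreal (2 ^ card (record_values x xs \<inter> {..N}))
              \<partial>replicate_pmf T inv_pronic_pmf)"
          by (simp add: ennreal_mult nn_integral_cmult)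
        also have "\<dots> \<le> 2 * ennreal (record_potential N x)"
          using Suc.IH[of x] by (rule mult_left_mono) simp
        finally show ?thesis
          using 2 record_potential_bounds(1)[of N x] by (simp add: b_def ennreal_mult)
      next
        case 3
        with True have "record_values c (x # xs) \<inter> {..N} = {}" for xs
          by (fastforce dest: record_values_gt)
        then show ?thesis using 3 True by (simp add: b_def)
      qed
    qed
    have b_bounds: "0 \<le> b x" "b x \<le> 2 * (real N + 2)" for x
      using record_potential_bounds[of N c] record_potential_bounds[of N x] by (auto simp: b_def)
    have "(\<integral>\<^sup>+xs. ennreal (2 ^ card (record_values c xs \<inter> {..N}))
          \<partial>replicate_pmf (Suc T) inv_pronic_pmf)
        \<le> (\<integral>\<^sup>+x. ennreal (b x) \<partial>inv_pronic_pmf)"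
      unfolding nn_integral_replicate_pmf_Suc by (intro nn_integral_mono step)
    also have "\<dots> = ennreal (measure_pmf.expectation inv_pronic_pmf b)"
      using b_bounds by (rule nn_integral_measure_pmf_bounded)
    also have "measure_pmf.expectation inv_pronic_pmf b = record_potential N c"
      unfolding b_def using True by (rule expectation_record_potential_step)
    finally show ?thesis .
  qed
qed

lemma prob_card_record_values_ge:
  "measure_pmf.prob (replicate_pmf T inv_pronic_pmf) {xs. t \<le> card (record_values 0 xs \<inter> {..N})}
     \<le> (real N + 2) / 2 / 2 ^ t"
proof -
  let ?Q = "replicate_pmf T inv_pronic_pmf" and ?S = "{xs. t \<le> card (record_values 0 xs \<inter> {..N})}"
  have "ennreal (2 ^ t) * emeasure ?Q ?S = (\<integral>\<^sup>+xs. ennreal (2 ^ t) * indicator ?S xs \<partial>?Q)"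
    by (simp add: nn_integral_cmult_indicator)
  also have "\<dots> \<le> (\<integral>\<^sup>+xs. ennreal (2 ^ card (record_values 0 xs \<inter> {..N})) \<partial>?Q)"
    by (intro nn_integral_mono) (auto simp: indicator_def intro!: ennreal_leI)
  also have "\<dots> \<le> ennreal (record_potential N 0)"
    by (rule nn_integral_two_pow_card_record_values_le)
  finally have "2 ^ t * measure_pmf.prob ?Q ?S \<le> record_potential N 0"
    using record_potential_bounds(1)[of N 0]
    by (simp add: measure_pmf.emeasure_eq_measure flip: ennreal_mult)
  then show ?thesis
    by (simp add: record_potential_def field_simps)
qed

text \<open>Truncating the potential 2 / c at U keeps it finitely supported.\<close>

definition tie_potential :: "nat \<Rightarrow> nat \<Rightarrow> real" where
  "tie_potential U c = (if c \<le> U then 2 / real c else 0)"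

lemma expectation_tie_potential_step:
  assumes "0 < c" "c \<le> U"
  shows "measure_pmf.expectation inv_pronic_pmf
           (\<lambda>x. if x \<le> c then 2 / real c + (if x = c then 1 else 0) else tie_potential U x)
         \<le> 2 / real c"
    (is "measure_pmf.expectation _ ?b \<le> _")
proof -
  have "measure_pmf.expectation inv_pronic_pmf ?b = (\<Sum>x\<le>U. ?b x * inv_pronic x)"
    using assms by (subst integral_measure_pmf_real[where A = "{..U}"])
      (auto simp: tie_potential_def split: if_splits)
  also have "\<dots> = (\<Sum>x\<le>c. ?b x * inv_pronic x) + (\<Sum>x\<in>{c<..U}. ?b x * inv_pronic x)"
    using assms by (subst sum.union_disjoint[symmetric]) (auto intro!: sum.cong)
  also have "(\<Sum>x\<le>c. ?b x * inv_pronic x)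
      = (\<Sum>x\<le>c. 2 / real c * inv_pronic x + (if x = c then inv_pronic c else 0))"
    by (rule sum.cong) (auto simp: algebra_simps)
  also have "\<dots> = 2 / real c * (real c / (real c + 1)) + inv_pronic c"
    by (simp only: sum.distrib sum_inv_pronic_atMost flip: sum_distrib_left) simp
  also have "(\<Sum>x\<in>{c<..U}. ?b x * inv_pronic x) = 2 * (\<Sum>x\<in>{c<..U}. 1 / ((real x)\<^sup>2 * (real x + 1)))"
    by (simp add: sum_distrib_left)
      (auto intro!: sum.cong simp: tie_potential_def inv_pronic_def power2_eq_square)
  also have "\<dots> \<le> 2 * (1 / (2 * real c * (real c + 1)))"
    using assms by (intro mult_left_mono sum_inv_square_mult_Suc_greaterThanAtMost_le) simp_all
  also have "2 / real c * (real c / (real c + 1)) + inv_pronic c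
      + 2 * (1 / (2 * real c * (real c + 1))) = 2 / real c"
    using assms by (simp add: inv_pronic_def divide_simps)
  finally show ?thesis by simp
qed

lemma nn_integral_tie_count_le:
  "0 < c \<Longrightarrow> (\<integral>\<^sup>+xs. ennreal (tie_count U c xs) \<partial>replicate_pmf T inv_pronic_pmf)
     \<le> ennreal (tie_potential U c)"
proof (induction T arbitrary: c)
  case 0
  then show ?case by simp
next
  case (Suc T)
  show ?case
  proof (cases "c \<le> U")
    case False
    then show ?thesis by (simp add: tie_count_eq_0)
  next
    case True
    define b where
      "b x = (if x \<le> c then 2 / real c + (if x = c then 1 else 0) else tie_potential U x)" for x
    have step: "(\<integral>\<^sup>+xs. ennreal (tie_count U c (x # xs)) \<partial>replicate_pmf T inv_pronic_pmf)
        \<le> ennreal (b x)" for x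
    proof (cases "x \<le> c")
      case True
      define a :: real where "a = (if x = c then 1 else 0)"
      have "(\<integral>\<^sup>+xs. ennreal (tie_count U c (x # xs)) \<partial>replicate_pmf T inv_pronic_pmf)
          \<le> (\<integral>\<^sup>+xs. ennreal a + ennreal (tie_count U c xs) \<partial>replicate_pmf T inv_pronic_pmf)"
        using True by (intro nn_integral_mono) (auto simp: a_def simp flip: ennreal_plus)
      also have "\<dots>
          = ennreal a + (\<integral>\<^sup>+xs. ennreal (tie_count U c xs) \<partial>replicate_pmf T inv_pronic_pmf)"
        by (subst nn_integral_add) auto
      also have "\<dots> \<le> ennreal a + ennreal (tie_potential U c)"
        using Suc.IH[OF Suc.prems] by (rule add_left_mono)
      also have "\<dots> = ennreal (b x)"
        using True \<open>c \<le> U\<close> by (simp add: a_def b_def tie_potential_def flip: ennreal_plus)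
      finally show ?thesis .
    next
      case False
      then show ?thesis using Suc.IH[of x] Suc.prems by (simp add: b_def)
    qed
    have "(\<integral>\<^sup>+xs. ennreal (tie_count U c xs) \<partial>replicate_pmf (Suc T) inv_pronic_pmf)
        \<le> (\<integral>\<^sup>+x. ennreal (b x) \<partial>inv_pronic_pmf)"
      unfolding nn_integral_replicate_pmf_Suc by (intro nn_integral_mono step)
    also have "\<dots> = ennreal (measure_pmf.expectation inv_pronic_pmf b)"
      using Suc.prems
      by (intro nn_integral_measure_pmf_bounded[where B = 3])
        (auto simp: b_def tie_potential_def divide_simps)
    also have "\<dots> \<le> ennreal (tie_potential U c)"
      unfolding b_def using expectation_tie_potential_step[OF Suc.prems True] True
      by (simp add: tie_potential_def ennreal_leI)
    finally show ?thesis .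
  qed
qed

lemma prob_tie_count_pos:
  assumes "0 < c"
  shows "measure_pmf.prob (replicate_pmf T inv_pronic_pmf) {xs. 0 < tie_count U c xs} \<le> 2 / real c"
proof -
  let ?Q = "replicate_pmf T inv_pronic_pmf" and ?S = "{xs. 0 < tie_count U c xs}"
  have "emeasure ?Q ?S = (\<integral>\<^sup>+xs. indicator ?S xs \<partial>?Q)"
    by simp
  also have "\<dots> \<le> (\<integral>\<^sup>+xs. ennreal (tie_count U c xs) \<partial>?Q)"
    by (intro nn_integral_mono) (auto simp: indicator_def intro!: ennreal_leI)
  also have "\<dots> \<le> ennreal (tie_potential U c)"
    using assms by (rule nn_integral_tie_count_le)
  also have "\<dots> \<le> ennreal (2 / real c)"
    by (intro ennreal_leI) (simp add: tie_potential_def)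
  finally show ?thesis
    by (simp add: measure_pmf.emeasure_eq_measure)
qed

section \<open>Almost sure behaviour of the records\<close>

lemma two_pow_add_two_div_le_geometric:
  "(2 ^ i + 2) / 2 / 2 ^ (3 * i - 3) \<le> 8 * (1 / 4 :: real) ^ i"
proof (cases i)
  case (Suc j)
  have "(2 :: real) ^ (3 * i - 3) = (2 ^ 3) ^ j"
    using Suc by (simp only: power_mult[symmetric]) simp
  also have "\<dots> = 2 ^ j * 4 ^ j"
    by (simp flip: power_mult_distrib)
  finally have "(2 ^ i + 2) / 2 / 2 ^ (3 * i - 3) = (2 ^ j + 1) / (2 ^ j * 4 ^ j :: real)"
    using Suc by (simp add: field_simps)
  also have "\<dots> \<le> 2 * 2 ^ j / (2 ^ j * 4 ^ j)"
    by (intro divide_right_mono) auto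
  also have "\<dots> = 8 * (1 / 4) ^ i"
    using Suc by (simp add: power_divide field_simps)
  finally show ?thesis .
qed simp

locale inv_pronic_sequence = iid_sequence M X inv_pronic_pmf
  for M :: "'a measure" and X :: "nat \<Rightarrow> 'a \<Rightarrow> nat"
begin

lemma AE_first_pos: "AE \<omega> in M. 0 < X 1 \<omega>"
proof (rule AE_I[where N = "{\<omega> \<in> space M. X 1 \<omega> = 0}"])
  show "{\<omega> \<in> space M. X 1 \<omega> = 0} \<in> sets M"
    using measurable_X[of 0] by simp
  show "emeasure M {\<omega> \<in> space M. X 1 \<omega> = 0} = 0"
    using prob_X_eq[of 1 0] by (simp add: emeasure_eq_measure inv_pronic_def)
qed auto

lemma AE_unbounded: "AE \<omega> in M. \<forall>L. \<exists>n>0. L < X n \<omega>"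
proof -
  have "AE \<omega> in M. \<forall>L. \<exists>n>0. X n \<omega> \<notin> {..L}"
    by (rule AE_not_always_in) (simp add: prob_inv_pronic_pmf_atMost)
  then show ?thesis
    by (simp add: not_le)
qed

lemma prob_many_small_records:
  "prob {\<omega> \<in> space M. \<exists>T. 3 * i - 3 \<le> card (record_values 0 (X_prefix T \<omega>) \<inter> {..2^i})}
     \<le> 8 * (1 / 4) ^ i"
proof -
  define B where
    "B T = {\<omega> \<in> space M. 3 * i - 3 \<le> card (record_values 0 (X_prefix T \<omega>) \<inter> {..2^i})}" for T
  have "incseq B"
  proof (rule incseq_SucI, rule subsetI)
    fix T \<omega> assume "\<omega> \<in> B T"
    moreover have "card (record_values 0 (X_prefix T \<omega>) \<inter> {..2^i})
        \<le> card (record_values 0 (X_prefix (Suc T) \<omega>) \<inter> {..2^i})"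
      using record_values_first_values_mono[of T "Suc T"] by (intro card_mono) auto
    ultimately show "\<omega> \<in> B (Suc T)"
      by (auto simp: B_def)
  qed
  moreover have "prob (B T) \<le> 8 * (1 / 4) ^ i" for T
  proof -
    have "prob (B T) = measure_pmf.prob (replicate_pmf T inv_pronic_pmf)
        {xs. 3 * i - 3 \<le> card (record_values 0 xs \<inter> {..2^i})}"
      unfolding B_def
      by (rule prob_first_values_in[where S = "{xs. _ \<le> card (record_values 0 xs \<inter> _)}", simplified])
    also have "\<dots> \<le> (real (2 ^ i) + 2) / 2 / 2 ^ (3 * i - 3)"
      by (rule prob_card_record_values_ge)
    also have "\<dots> \<le> 8 * (1 / 4) ^ i"
      using two_pow_add_two_div_le_geometric[of i] by simp
    finally show ?thesis .
  qed
  moreover have "range B \<subseteq> sets M"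
    unfolding B_def using sets_first_values_pred by auto
  ultimately have "prob (\<Union>T. B T) \<le> 8 * (1 / 4) ^ i"
    by (intro measure_UN_incseq_le) auto
  moreover have "(\<Union>T. B T)
      = {\<omega> \<in> space M. \<exists>T. 3 * i - 3 \<le> card (record_values 0 (X_prefix T \<omega>) \<inter> {..2^i})}"
    by (auto simp: B_def)
  ultimately show ?thesis
    by simp
qed

lemma AE_eventually_few_small_records:
  "AE \<omega> in M. eventually (\<lambda>i. \<forall>T.
     card (record_values 0 (X_prefix T \<omega>) \<inter> {..2^i}) < 3 * i - 3) sequentially"
proof -
  define A where
    "A i = {\<omega> \<in> space M. \<exists>T. 3 * i - 3 \<le> card (record_values 0 (X_prefix T \<omega>) \<inter> {..2^i})}" for i
  have A_sets: "A i \<in> sets M" for i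
  proof -
    have "A i = (\<Union>T. {\<omega> \<in> space M. 3 * i - 3 \<le> card (record_values 0 (X_prefix T \<omega>) \<inter> {..2^i})})"
      by (auto simp: A_def)
    then show ?thesis
      using sets_first_values_pred by auto
  qed
  have "AE \<omega> in M. eventually (\<lambda>i. \<omega> \<in> space M - A i) sequentially"
  proof (rule borel_cantelli_AE1[OF A_sets])
    show "emeasure M (A i) < \<infinity>" for i
      by (simp add: less_top[symmetric])
    show "summable (\<lambda>i. prob (A i))"
    proof (rule summable_comparison_test')
      show "summable (\<lambda>i. 8 * (1 / 4 :: real) ^ i)"
        by (intro summable_mult summable_geometric) simp
      show "norm (prob (A i)) \<le> 8 * (1 / 4) ^ i" for i
        using prob_many_small_records[of i] by (simp add: A_def)
    qed
  qed
  then show ?thesis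
    by (rule AE_mp) (auto intro!: AE_I2 elim!: eventually_mono simp: A_def not_le)
qed

lemma prob_some_tie_le:
  assumes "0 < c"
  shows "prob {\<omega> \<in> space M. \<exists>T. 0 < tie_count T c (X_prefix T \<omega>)} \<le> 2 / real c"
proof -
  define B where "B T = {\<omega> \<in> space M. 0 < tie_count T c (X_prefix T \<omega>)}" for T
  have "incseq B"
  proof (rule incseq_SucI, rule subsetI)
    fix T \<omega> assume "\<omega> \<in> B T"
    moreover have "tie_count T c (X_prefix T \<omega>)
        \<le> tie_count (Suc T) c (X_prefix T \<omega>)"
      by (rule tie_count_mono) simp
    moreover have "\<dots> \<le> tie_count (Suc T) c (X_prefix (Suc T) \<omega>)"
      by (simp add: first_values_Suc tie_count_append)
    ultimately show "\<omega> \<in> B (Suc T)"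
      by (auto simp: B_def)
  qed
  moreover have "prob (B T) \<le> 2 / real c" for T
  proof -
    have "prob (B T) = measure_pmf.prob (replicate_pmf T inv_pronic_pmf) {xs. 0 < tie_count T c xs}"
      unfolding B_def
      by (rule prob_first_values_in[where S = "{xs. 0 < tie_count T c xs}", simplified])
    also have "\<dots> \<le> 2 / real c"
      using assms by (rule prob_tie_count_pos)
    finally show ?thesis .
  qed
  moreover have "range B \<subseteq> sets M"
    unfolding B_def using sets_first_values_pred by auto
  ultimately have "prob (\<Union>T. B T) \<le> 2 / real c"
    by (intro measure_UN_incseq_le) auto
  moreover have "(\<Union>T. B T) = {\<omega> \<in> space M. \<exists>T. 0 < tie_count T c (X_prefix T \<omega>)}"
    by (auto simp: B_def)
  ultimately show ?thesis
    by simp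
qed

lemma AE_ex_no_ties: "AE \<omega> in M. \<exists>c>0. \<forall>T. tie_count T c (X_prefix T \<omega>) = 0"
proof -
  define E where "E c = {\<omega> \<in> space M. \<exists>T. 0 < tie_count T c (X_prefix T \<omega>)}" for c
  have E_sets: "E c \<in> sets M" for c
  proof -
    have "E c = (\<Union>T. {\<omega> \<in> space M. 0 < tie_count T c (X_prefix T \<omega>)})"
      by (auto simp: E_def)
    then show ?thesis
      using sets_first_values_pred by auto
  qed
  show ?thesis
  proof (rule AE_I[where N = "\<Inter>c. E (Suc c)"])
    show "{\<omega> \<in> space M. \<not> (\<exists>c>0. \<forall>T. tie_count T c (X_prefix T \<omega>) = 0)} \<subseteq> (\<Inter>c. E (Suc c))"
      by (auto simp: E_def)
    show "(\<Inter>c. E (Suc c)) \<in> sets M"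
      using E_sets by auto
    have bound: "prob (\<Inter>c. E (Suc c)) \<le> 2 / real (Suc c)" for c
    proof -
      have "prob (\<Inter>c. E (Suc c)) \<le> prob (E (Suc c))"
        by (rule finite_measure_mono[OF _ E_sets]) auto
      also have "\<dots> \<le> 2 / real (Suc c)"
        unfolding E_def by (rule prob_some_tie_le) simp
      finally show ?thesis .
    qed
    have "(\<lambda>c. 2 / real (Suc c)) \<longlonglongrightarrow> 0"
      using tendsto_mult_right_zero[OF LIMSEQ_inverse_real_of_nat, of 2]
      by (simp add: divide_inverse)
    then have "prob (\<Inter>c. E (Suc c)) \<le> 0"
      by (rule LIMSEQ_le_const) (use bound in blast)
    then show "emeasure M (\<Inter>c. E (Suc c)) = 0"
      by (simp add: emeasure_eq_measure measure_le_0_iff)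
  qed
qed

lemma AE_eventually_record_value_unrepeated_and_large:
  "AE \<omega> in M. eventually (\<lambda>j.
     (\<forall>n. record_time (\<lambda>i. X i \<omega>) j < n \<and> n < record_time (\<lambda>i. X i \<omega>) (Suc j)
        \<longrightarrow> X n \<omega> < X (record_time (\<lambda>i. X i \<omega>) j) \<omega>)
     \<and> 2 powr (real j / 3) < real (X (record_time (\<lambda>i. X i \<omega>) j) \<omega>)) sequentially"
  using AE_first_pos AE_unbounded AE_eventually_few_small_records AE_ex_no_ties
proof eventually_elim
  case (elim \<omega>)
  then obtain c where "0 < c" "\<And>T. tie_count T c (X_prefix T \<omega>) = 0"
    by blast
  with elim show ?case
    by (intro eventually_record_value_unrepeated_and_large[where c = c]) auto
qed

end

lemma inv_pronic_sequenceI: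
  fixes M :: "'a measure" and k :: "nat \<Rightarrow> 'a \<Rightarrow> nat"
  assumes "prob_space M"
    and "prob_space.indep_vars M (\<lambda>_. count_space UNIV) k {1..}"
    and vals: "\<And>n \<omega>. n \<ge> 1 \<Longrightarrow> \<omega> \<in> space M \<Longrightarrow> k n \<omega> \<ge> 1"
    and distr: "\<And>n m. n \<ge> 1 \<Longrightarrow> m \<ge> 1 \<Longrightarrow>
        measure M {\<omega> \<in> space M. k n \<omega> = m} = 1 / (real m * (real m + 1))"
  shows "inv_pronic_sequence M k"
proof -
  interpret prob_space M by fact
  show ?thesis
  proof
    show "prob {\<omega> \<in> space M. k n \<omega> = m} = pmf inv_pronic_pmf m" if "0 < n" for n m
    proof (cases "m = 0")
      case True
      then have "{\<omega> \<in> space M. k n \<omega> = m} = {}"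
        using vals[of n] that by fastforce
      then have "prob {\<omega> \<in> space M. k n \<omega> = m} = 0"
        by (simp only: measure_empty)
      then show ?thesis
        using True by (simp add: inv_pronic_def)
    qed (use distr[of n m] that in \<open>simp add: inv_pronic_def\<close>)
  qed fact
qed

theorem lemma4:
  fixes M :: "'a measure" and k :: "nat \<Rightarrow> 'a \<Rightarrow> nat"
  assumes "prob_space M"
    and indep: "prob_space.indep_vars M (\<lambda>_. count_space UNIV) k {1..}"
    and vals: "\<And>n \<omega>. n \<ge> 1 \<Longrightarrow> \<omega> \<in> space M \<Longrightarrow> k n \<omega> \<ge> 1"
    and distr: "\<And>n m. n \<ge> 1 \<Longrightarrow> m \<ge> 1 \<Longrightarrow>
        measure M {\<omega> \<in> space M. k n \<omega> = m} = 1 / (real m * (real m + 1))"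
  shows "AE \<omega> in M. eventually (\<lambda>j.
           (\<forall>n. record_time (\<lambda>i. k i \<omega>) j < n \<and> n < record_time (\<lambda>i. k i \<omega>) (Suc j)
                 \<longrightarrow> k n \<omega> < k (record_time (\<lambda>i. k i \<omega>) j) \<omega>)
         \<and> real (k (record_time (\<lambda>i. k i \<omega>) j) \<omega>) > 2 powr (real j / 3)) sequentially"
proof -
  interpret inv_pronic_sequence M k
    using assms by (rule inv_pronic_sequenceI)
  show ?thesis
    by (rule AE_eventually_record_value_unrepeated_and_large)
qed

end
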